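(* Let $i,j\in\mathrm{Idx}$ with $i\neq j$, $t$ a term, $\mathbf t'$ a hyper-term with $i,j\notin\mathrm{supp}(\mathbf t')$, and $Q$ a post hyper-assertion. Then $$\big(\mathrm{wp}\,([i:t,j:t]\uplus\mathbf t')\,\{Q\}\big)[j\mapsto i]\ \vdash\ \mathrm{wp}\,([i:t]\uplus\mathbf t')\,\{Q[j\mapsto i]\}.$$
   Context: Setting. $\mathrm{Val}=\mathbb{Z}$; $\mathrm{PVar}$ is a countably infinite set of program variables; a store is a function $s:\mathrm{PVar}\to\mathrm{Val}$; indices are $\mathrm{Idx}=\mathbb{N}$. Terms of a first-order imperative language are generated by $t ::= v \mid x \mid * \mid t\oplus t \mid \mathtt{skip}\mid x:=t \mid t;t \mid \mathtt{if}\ t\ \mathtt{then}\ t\ \mathtt{else}\ t \mid \mathtt{while}\ t\ \mathtt{do}\ t$, with a nondeterministic big-step semantics $t,s\Downarrow v,s'$. A hyper-term $\mathbf t$ is a finitely supported partial function from $\mathrm{Idx}$ to terms; a hyper-store is a total function $\mathbf s:\mathrm{Idx}\to\mathrm{Store}$; a hyper-return-value is a finitely supported partial function $\mathbf v:\mathrm{Idx}\rightharpoonup\mathrm{Val}$. $[i_1:t_1,\dots,i_n:t_n]$ is a finite map, $\uplus$ union of maps with disjoint supports. $\mathbf t,\mathbf s\Downarrow\mathbf v,\mathbf s'$ holds iff for every $i\in\mathrm{supp}(\mathbf t)$, $\mathbf t(i),\mathbf s(i)\Downarrow\mathbf v(i),\mathbf s'(i)$, and for every $i\notin\mathrm{supp}(\mathbf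 t)$, $\mathbf s'(i)=\mathbf s(i)$ and $\mathbf v(i)$ is undefined. A hyper-assertion is a predicate on hyper-stores; a post hyper-assertion is an upward-closed map $Q$ from hyper-return-values to hyper-assertions (if $Q(\mathbf v)(\mathbf s)$ and $\mathbf v'$ agrees with $\mathbf v$ on $\mathrm{supp}(\mathbf v)$ then $Q(\mathbf v')(\mathbf s)$). Entailment $P\vdash R$ means $\forall\mathbf s.\ P(\mathbf s)\Rightarrow R(\mathbf s)$. $\mathrm{wp}\,\mathbf t\,\{Q\}(\mathbf s):\iff\forall\mathbf v,\mathbf s'.\ (\mathbf t,\mathbf s\Downarrow\mathbf v,\mathbf s')\Rightarrow Q(\mathbf v)(\mathbf s')$. Reindexing. For $\pi:\mathrm{Idx}\to\mathrm{Idx}$ and a (possibly partial) function $\mathbf a$ on indices, $\mathbf a[\pi]:=\lambda k.\ \mathbf a(\pi(k))$ (undefined where $\mathbf a(\pi(k))$ is). For a hyper-assertion $P$, $P[\pi](\mathbf s):=P(\mathbf s[\pi])$; for a post hyper-assertion $Q$, $Q[\pi]:=\lambda\mathbf v.\ Q(\mathbf v[\pi])[\pi]$. $[j\mapsto i]$ denotes the reindexing $\pi$ with $\pi(j)=i$ and $\pi(k)=k$ for $k\neq j$. *)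

theory Defs
  imports Main
begin

type_synonym val = int
type_synonym pvar = string   (* countably infinite set of program variables *)
type_synonym store = "pvar \<Rightarrow> val"
type_synonym idx = nat

datatype "term" =
    TVal val
  | TVar pvar
  | TStar
  | TBin "val \<Rightarrow> val \<Rightarrow> val" "term" "term"
  | TSkip
  | TAssign pvar "term"
  | TSeq "term" "term"
  | TIf "term" "term" "term"
  | TWhile "term" "term"

inductive big_step :: "term \<Rightarrow> store \<Rightarrow> val \<Rightarrow> store \<Rightarrow> bool" where
  Val: "big_step (TVal v) s v s"
| Var: "big_step (TVar x) s (s x) s"
| Star: "big_step TStar s v s"
| Bin: "big_step t1 s v1 s1 \<Longrightarrow> big_step t2 s1 v2 s2 \<Longrightarrow> big_step (TBin f t1 t2) s (f v1 v2) s2"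
| Skip: "big_step TSkip s 0 s"
| Assign: "big_step t s v s' \<Longrightarrow> big_step (TAssign x t) s v (s'(x := v))"
| Seq: "big_step t1 s v1 s1 \<Longrightarrow> big_step t2 s1 v2 s2 \<Longrightarrow> big_step (TSeq t1 t2) s v2 s2"
| IfT: "big_step b s vb s1 \<Longrightarrow> vb \<noteq> 0 \<Longrightarrow> big_step t1 s1 v s2 \<Longrightarrow> big_step (TIf b t1 t2) s v s2"
| IfF: "big_step b s 0 s1 \<Longrightarrow> big_step t2 s1 v s2 \<Longrightarrow> big_step (TIf b t1 t2) s v s2"
| WhileF: "big_step b s 0 s1 \<Longrightarrow> big_step (TWhile b c) s 0 s1"
| WhileT: "big_step b s vb s1 \<Longrightarrow> vb \<noteq> 0 \<Longrightarrow> big_step c s1 vc s2 \<Longrightarrow>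
           big_step (TWhile b c) s2 v s3 \<Longrightarrow> big_step (TWhile b c) s v s3"

type_synonym hterm = "idx \<rightharpoonup> term"
type_synonym hstore = "idx \<Rightarrow> store"
type_synonym hval = "idx \<rightharpoonup> val"
type_synonym hassn = "hstore \<Rightarrow> bool"
type_synonym hpost = "hval \<Rightarrow> hassn"

definition hbig_step :: "hterm \<Rightarrow> hstore \<Rightarrow> hval \<Rightarrow> hstore \<Rightarrow> bool" where
  "hbig_step t s v s' \<longleftrightarrow>
     (\<forall>i tm. t i = Some tm \<longrightarrow> (\<exists>w. v i = Some w \<and> big_step tm (s i) w (s' i))) \<and>
     (\<forall>i. t i = None \<longrightarrow> s' i = s i \<and> v i = None)"

definition upward_closed :: "hpost \<Rightarrow> bool" where
  "upward_closed Q \<longleftrightarrow> (\<forall>v v' s. Q v s \<longrightarrow> (\<forall>i\<in>dom v. v' i = v i) \<longrightarrow> Q v' s)"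

definition entails :: "hassn \<Rightarrow> hassn \<Rightarrow> bool" (infix "\<turnstile>" 50) where
  "P \<turnstile> R \<longleftrightarrow> (\<forall>s. P s \<longrightarrow> R s)"

definition wp :: "hterm \<Rightarrow> hpost \<Rightarrow> hassn" where
  "wp t Q s \<longleftrightarrow> (\<forall>v s'. hbig_step t s v s' \<longrightarrow> Q v s')"

definition reidx :: "(idx \<Rightarrow> idx) \<Rightarrow> (idx \<Rightarrow> 'a) \<Rightarrow> idx \<Rightarrow> 'a" where
  "reidx \<pi> a = (\<lambda>k. a (\<pi> k))"

definition reidx_assn :: "(idx \<Rightarrow> idx) \<Rightarrow> hassn \<Rightarrow> hassn" where
  "reidx_assn \<pi> P = (\<lambda>s. P (reidx \<pi> s))"

definition reidx_post :: "(idx \<Rightarrow> idx) \<Rightarrow> hpost \<Rightarrow> hpost" where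
  "reidx_post \<pi> Q = (\<lambda>v. reidx_assn \<pi> (Q (reidx \<pi> v)))"

definition redir :: "idx \<Rightarrow> idx \<Rightarrow> idx \<Rightarrow> idx" where
  "redir j i = (\<lambda>k. if k = j then i else k)"

end

theory Submission
  imports Defs
begin

text \<open>Executions are stable under arbitrary reindexing \<open>\<pi>\<close>, because every component of the
  reindexed execution is a component of the original one. Duplicating component \<open>i\<close> into slot \<open>j\<close>
  is the reindexing \<open>[j \<mapsto> i]\<close>, which maps \<open>[i:t] \<uplus> t'\<close> to \<open>[i:t, j:t] \<uplus> t'\<close>.\<close>

lemma hbig_step_reidx:
  assumes "hbig_step t s v s'"
  shows "hbig_step (reidx \<pi> t) (reidx \<pi> s) (reidx \<pi> v) (reidx \<pi> s')"
  using assms unfolding hbig_step_def reidx_def by blast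

lemma reidx_wp_entails_wp_reidx_post:
  "reidx_assn \<pi> (wp (reidx \<pi> t) Q) \<turnstile> wp t (reidx_post \<pi> Q)"
  unfolding entails_def reidx_assn_def reidx_post_def wp_def
  using hbig_step_reidx by blast

lemma reidx_redir_duplicate:
  assumes "i \<notin> dom t'" and "j \<notin> dom t'"
  shows "reidx (redir j i) ([i \<mapsto> t] ++ t') = [i \<mapsto> t, j \<mapsto> t] ++ t'"
  using assms by (auto simp: reidx_def redir_def map_add_def split: option.splits)

theorem mainTheorem14:
  fixes i j :: idx and t :: "term" and t' :: hterm and Q :: hpost
  assumes "i \<noteq> j"
    and "finite (dom t')"
    and "i \<notin> dom t'" and "j \<notin> dom t'"
    and "upward_closed Q"
  shows "reidx_assn (redir j i) (wp ([i \<mapsto> t, j \<mapsto> t] ++ t') Q)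
           \<turnstile> wp ([i \<mapsto> t] ++ t') (reidx_post (redir j i) Q)"
  using reidx_wp_entails_wp_reidx_post[of "redir j i" "[i \<mapsto> t] ++ t'" Q]
  by (simp only: reidx_redir_duplicate[OF assms(3,4)])

end
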